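(* Let $M=\frac32-\sqrt2$ and for $\xi\in[0,\frac14]$ define $$G_\xi(w,f)=(1-f)\,y\left(\tfrac12-y\right)+4M\xi\cdot\frac{w}{1-f},\qquad y=1-\frac{w}{1-f}.$$ Let $\kappa=\frac{1019}{1000}$. For all $w_1,w_2,w_3\in[0,\frac12]$ and $f_1,f_2,f_3\in[0,\frac12]$ such that $\frac{1-f_i}{2}\le w_i\le1-f_i$ for $i=1,2,3$, and for every $\xi\in[0,\frac14]$, $$\tfrac12\bigl(G_\xi(w_1,f_1)+G_\xi(w_2,f_2)\bigr)\le\kappa\cdot G_\xi\!\left(\tfrac{w_1+w_2}{2},\tfrac{f_1+f_2}{2}\right),$$ $$\tfrac13\bigl(G_\xi(w_1,f_1)+G_\xi(w_2,f_2)+G_\xi(w_3,f_3)\bigr)\le\kappa\cdot G_\xi\!\left(\tfrac{w_1+w_2+w_3}{3},\tfrac{f_1+f_2+f_3}{3}\right).$$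
   Context: Here $(1-f)y(\frac12-y)$ with $y=1-\frac{w}{1-f}$ is the quantity $\frac{1-f}{\Phi(1-\frac w{1-f})}$ for the potential $\Phi(x)=\frac{1}{x(\frac12-x)}$; $M=\frac32-\sqrt2=\sup_{0\le x\le1/2}\frac{x(\frac12-x)}{1-x}$. *)

theory Defs
  imports Complex_Main
begin

definition M_const :: real where
  "M_const = 3/2 - sqrt 2"

definition G :: "real \<Rightarrow> real \<Rightarrow> real \<Rightarrow> real" where
  "G \<xi> w f = (let y = 1 - w / (1 - f) in
      (1 - f) * y * (1/2 - y) + 4 * M_const * \<xi> * (w / (1 - f)))"

definition kappa :: real where
  "kappa = 1019 / 1000"

end

theory Submission
  imports Defs
begin

text \<open>In the coordinates \<open>g = 1 - f\<close> and \<open>y = 1 - w/g\<close> the function \<open>G\<close> becomes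
\<open>g y (1/2 - y) + c (1 - y)\<close> with \<open>c = 4 M \<xi>\<close>, and averaging \<open>(w, f)\<close> turns into averaging \<open>g\<close>
together with the \<open>g\<close>-weighted average of \<open>y\<close>. Writing \<open>y\<^sub>i = Y + e\<^sub>i\<close>, the weights make
\<open>\<Sum> g\<^sub>i e\<^sub>i = 0\<close>, so the mean of the values differs from the value at the mean by
\<open>-(1/n) \<Sum> (g\<^sub>i e\<^sub>i\<^sup>2 + c e\<^sub>i)\<close>. Completing squares against the constraint bounds this defect by
\<open>c\<^sup>2/(2 m\<^sup>2)\<close> times the variance of the \<open>g\<^sub>i\<close>, which is at most \<open>m\<^sup>2/8\<close> because \<open>g\<^sub>i \<in> [1/2, 1]\<close>.
The resulting \<open>c\<^sup>2/16\<close> is absorbed by \<open>(\<kappa> - 1)\<close> times the value at the mean, which is at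
least \<open>c/2\<close>.\<close>

definition G_yform :: "real \<Rightarrow> real \<Rightarrow> real \<Rightarrow> real" where
  "G_yform c g y = g * y * (1/2 - y) + c * (1 - y)"

lemma G_eq_G_yform:
  assumes "f < 1"
  shows "G \<xi> w f = G_yform (4 * M_const * \<xi>) (1 - f) (1 - w / (1 - f))"
  by (simp add: G_def G_yform_def Let_def)

lemma M_const_bounds: "0 \<le> M_const" "M_const \<le> 1/10"
proof -
  have "sqrt 2 \<le> 3/2" by (rule real_le_lsqrt) (auto simp: power2_eq_square)
  moreover have "7/5 \<le> sqrt 2" by (rule real_le_rsqrt) (auto simp: power2_eq_square)
  ultimately show "0 \<le> M_const" "M_const \<le> 1/10" by (auto simp: M_const_def)
qed

lemma neg_half_sq_le_quadratic:
  fixes g e k :: real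
  assumes "1/2 \<le> g"
  shows "- (k^2) / 2 \<le> g * e^2 - k * e"
proof -
  have "1/2 * e^2 \<le> g * e^2" using assms by (rule mult_right_mono) simp
  moreover have "0 \<le> (e - k)^2" by simp
  ultimately show ?thesis by (simp add: power2_eq_square algebra_simps)
qed

lemma G_yform_ge_half:
  assumes "0 \<le> c" "0 \<le> g" "0 \<le> y" "y \<le> 1/2"
  shows "c / 2 \<le> G_yform c g y"
proof -
  have "0 \<le> g * y * (1/2 - y)" using assms by simp
  moreover have "c * (1/2) \<le> c * (1 - y)" using assms by (intro mult_left_mono) auto
  ultimately show ?thesis by (simp add: G_yform_def)
qed

lemma sum_sq_dev_le_mean_sq:
  fixes g :: "'a \<Rightarrow> real" and m :: real
  assumes "\<And>i. i \<in> A \<Longrightarrow> 1/2 \<le> g i \<and> g i \<le> 1"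
    and m: "m = sum g A / card A"
  shows "(\<Sum>i\<in>A. (g i - m)^2) \<le> card A * m^2 / 8"
proof -
  have sum_g: "sum g A = card A * m"
    using m by (cases "finite A \<and> A \<noteq> {}") (auto simp: card_eq_0_iff)
  \<comment> \<open>\<open>g\<^sup>2 \<le> 3g/2 - 1/2\<close> on \<open>[1/2, 1]\<close>\<close>
  have "(g i - m)^2 \<le> 3/2 * g i - 1/2 - 2 * m * g i + m^2" if "i \<in> A" for i
  proof -
    have "0 \<le> (g i - 1/2) * (1 - g i)" using assms(1)[OF that] by simp
    moreover have "(g i - m)^2 - (3/2 * g i - 1/2 - 2 * m * g i + m^2) = - ((g i - 1/2) * (1 - g i))"
      by (simp add: power2_eq_square field_simps)
    ultimately show ?thesis by linarith
  qed
  then have "(\<Sum>i\<in>A. (g i - m)^2) \<le> (\<Sum>i\<in>A. 3/2 * g i - 1/2 - 2 * m * g i + m^2)"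
    by (rule sum_mono)
  also have "\<dots> = (\<Sum>i\<in>A. (3/2 - 2 * m) * g i + (m^2 - 1/2))"
    by (rule sum.cong) (auto simp: algebra_simps)
  also have "\<dots> = (3/2 - 2 * m) * sum g A + card A * (m^2 - 1/2)"
    by (simp add: sum.distrib sum_distrib_left)
  also have "\<dots> = card A * (3/2 * m - 1/2 - m^2)"
    by (simp add: sum_g power2_eq_square algebra_simps)
  also have "\<dots> \<le> card A * m^2 / 8"
  proof -
    have "0 \<le> card A * (3 * m - 2)^2" by simp
    then show ?thesis by (simp add: power2_eq_square algebra_simps)
  qed
  finally show ?thesis .
qed

lemma sum_G_yform_eq:
  fixes g y :: "'a \<Rightarrow> real" and c Y :: real
  assumes "(\<Sum>i\<in>A. g i * (y i - Y)) = 0"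
  shows "(\<Sum>i\<in>A. G_yform c (g i) (y i))
    = card A * c * (1 - Y) + sum g A * Y * (1/2 - Y) - (\<Sum>i\<in>A. g i * (y i - Y)^2 + c * (y i - Y))"
proof -
  have "G_yform c (g i) (y i)
      = g i * (Y * (1/2 - Y)) + c * (1 - Y) + (1/2 - 2 * Y) * (g i * (y i - Y))
        - (g i * (y i - Y)^2 + c * (y i - Y))" for i
    by (simp add: G_yform_def power2_eq_square algebra_simps)
  then have "(\<Sum>i\<in>A. G_yform c (g i) (y i))
      = sum g A * (Y * (1/2 - Y)) + card A * (c * (1 - Y)) + (1/2 - 2 * Y) * (\<Sum>i\<in>A. g i * (y i - Y))
        - (\<Sum>i\<in>A. g i * (y i - Y)^2 + c * (y i - Y))"
    by (simp add: sum.distrib sum_subtractf sum_distrib_left sum_distrib_right)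
  then show ?thesis using assms by simp
qed

lemma sum_quadratic_ge:
  fixes g e :: "'a \<Rightarrow> real" and c :: real
  assumes "\<And>i. i \<in> A \<Longrightarrow> 1/2 \<le> g i \<and> g i \<le> 1"
    and "(\<Sum>i\<in>A. g i * e i) = 0"
  shows "- (card A * c^2 / 16) \<le> (\<Sum>i\<in>A. g i * e i^2 + c * e i)"
proof (cases "A = {} \<or> infinite A")
  case True
  then show ?thesis by auto
next
  case False
  define m where "m = sum g A / card A"
  have "card A / 2 \<le> sum g A"
    using sum_mono[of A "\<lambda>_. 1/2" g] assms(1) by auto
  moreover have "0 < card A" using False by (auto simp: card_gt_0_iff)
  ultimately have m_pos: "0 < m" by (simp add: m_def)
  \<comment> \<open>subtracting \<open>(c/m) \<Sum> g\<^sub>i e\<^sub>i = 0\<close> leaves coefficients proportional to \<open>g\<^sub>i - m\<close>\<close>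
  define k where "k i = c * (g i - m) / m" for i
  have "(\<Sum>i\<in>A. g i * e i^2 + c * e i) = (\<Sum>i\<in>A. g i * e i^2 - k i * e i)"
  proof -
    have "g i * e i^2 + c * e i = (g i * e i^2 - k i * e i) + c / m * (g i * e i)" for i
      using m_pos by (simp add: k_def field_simps)
    then have "(\<Sum>i\<in>A. g i * e i^2 + c * e i)
        = (\<Sum>i\<in>A. g i * e i^2 - k i * e i) + c / m * (\<Sum>i\<in>A. g i * e i)"
      by (simp only: sum.distrib sum_distrib_left)
    then show ?thesis using assms(2) by simp
  qed
  moreover have "- (\<Sum>i\<in>A. k i^2) / 2 \<le> (\<Sum>i\<in>A. g i * e i^2 - k i * e i)"
    using sum_mono[of A "\<lambda>i. - (k i^2) / 2"] neg_half_sq_le_quadratic assms(1)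
    by (simp add: sum_negf sum_divide_distrib)
  moreover have "(\<Sum>i\<in>A. k i^2) = c^2 / m^2 * (\<Sum>i\<in>A. (g i - m)^2)"
    by (simp add: k_def power_divide power_mult_distrib sum_distrib_left)
  moreover have "c^2 / m^2 * (\<Sum>i\<in>A. (g i - m)^2) \<le> c^2 / m^2 * (card A * m^2 / 8)"
    using sum_sq_dev_le_mean_sq[OF assms(1) m_def] by (intro mult_left_mono) auto
  moreover have "c^2 / m^2 * (card A * m^2 / 8) = card A * c^2 / 8"
    using m_pos by simp
  ultimately show ?thesis by linarith
qed

lemma G_yform_mean_le:
  fixes g y :: "'a \<Rightarrow> real"
  assumes A: "finite A" "A \<noteq> {}"
    and g: "\<And>i. i \<in> A \<Longrightarrow> 1/2 \<le> g i \<and> g i \<le> 1"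
    and y: "\<And>i. i \<in> A \<Longrightarrow> 0 \<le> y i \<and> y i \<le> 1/2"
    and c: "0 \<le> c" "c \<le> 8 * (kappa - 1)"
  shows "(\<Sum>i\<in>A. G_yform c (g i) (y i)) / card A
    \<le> kappa * G_yform c (sum g A / card A) ((\<Sum>i\<in>A. g i * y i) / sum g A)"
proof -
  define n where "n = real (card A)"
  define m where "m = sum g A / n"
  define Y where "Y = (\<Sum>i\<in>A. g i * y i) / sum g A"
  have n_pos: "0 < n" using A by (simp add: n_def card_gt_0_iff)
  have "n / 2 \<le> sum g A"
    using sum_mono[of A "\<lambda>_. 1/2" g] g by (auto simp: n_def)
  then have S_pos: "0 < sum g A" using n_pos by linarith
  have g_nonneg: "0 \<le> g i" if "i \<in> A" for i using g[OF that] by simp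
  have "0 \<le> (\<Sum>i\<in>A. g i * y i)"
    using g_nonneg y by (intro sum_nonneg mult_nonneg_nonneg) auto
  moreover have "(\<Sum>i\<in>A. g i * y i) \<le> (\<Sum>i\<in>A. g i * (1/2))"
    using g_nonneg y by (intro sum_mono mult_left_mono) auto
  ultimately have Y: "0 \<le> Y" "Y \<le> 1/2"
    using S_pos by (auto simp: Y_def divide_le_eq sum_divide_distrib[symmetric])
  have "(\<Sum>i\<in>A. g i * (y i - Y)) = (\<Sum>i\<in>A. g i * y i) - sum g A * Y"
    by (simp add: right_diff_distrib sum_subtractf sum_distrib_right)
  then have balanced: "(\<Sum>i\<in>A. g i * (y i - Y)) = 0"
    using S_pos by (simp add: Y_def)
  have "n * G_yform c m Y = card A * c * (1 - Y) + sum g A * Y * (1/2 - Y)"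
    using n_pos by (simp add: G_yform_def m_def n_def field_simps)
  then have "(\<Sum>i\<in>A. G_yform c (g i) (y i))
      = n * G_yform c m Y - (\<Sum>i\<in>A. g i * (y i - Y)^2 + c * (y i - Y))"
    by (simp only: sum_G_yform_eq[OF balanced])
  also have "\<dots> \<le> n * (G_yform c m Y + c^2 / 16)"
    using sum_quadratic_ge[OF g balanced, of c] by (simp add: n_def algebra_simps)
  also have "\<dots> \<le> n * (kappa * G_yform c m Y)"
  proof -
    have "c / 2 \<le> G_yform c m Y" using G_yform_ge_half[OF c(1) _ Y] S_pos n_pos by (simp add: m_def)
    moreover have "c * c \<le> 8 * (kappa - 1) * c" using c by (intro mult_right_mono) auto
    ultimately have "c^2 / 16 \<le> (kappa - 1) * G_yform c m Y"
      by (auto simp: kappa_def power2_eq_square)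
    then have "G_yform c m Y + c^2 / 16 \<le> kappa * G_yform c m Y"
      by (simp add: algebra_simps)
    then show ?thesis using n_pos by (intro mult_left_mono) auto
  qed
  finally show ?thesis using n_pos by (simp add: divide_le_eq m_def Y_def n_def mult.commute)
qed

lemma G_mean_le:
  fixes w f :: "'a \<Rightarrow> real"
  assumes A: "finite A" "A \<noteq> {}"
    and f: "\<And>i. i \<in> A \<Longrightarrow> 0 \<le> f i \<and> f i \<le> 1/2"
    and w: "\<And>i. i \<in> A \<Longrightarrow> (1 - f i) / 2 \<le> w i \<and> w i \<le> 1 - f i"
    and \<xi>: "0 \<le> \<xi>" "\<xi> \<le> 1/4"
  shows "(\<Sum>i\<in>A. G \<xi> (w i) (f i)) / card A \<le> kappa * G \<xi> (sum w A / card A) (sum f A / card A)"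
proof -
  define c where "c = 4 * M_const * \<xi>"
  define g y where "g i = 1 - f i" and "y i = 1 - w i / (1 - f i)" for i
  have c: "0 \<le> c" "c \<le> 8 * (kappa - 1)"
  proof -
    have "M_const * \<xi> \<le> 1/10 * (1/4)"
      using M_const_bounds \<xi> by (intro mult_mono) auto
    then show "0 \<le> c" "c \<le> 8 * (kappa - 1)"
      using M_const_bounds \<xi> by (auto simp: c_def kappa_def)
  qed
  have gy_w: "g i * y i = g i - w i" if "i \<in> A" for i
    using f[OF that] by (simp add: g_def y_def field_simps)
  have n_pos: "0 < real (card A)" using A by (simp add: card_gt_0_iff)
  have mean_f: "1 - sum f A / card A = sum g A / card A"
    using n_pos by (simp add: g_def sum_subtractf field_simps)
  have S_pos: "0 < sum g A" using A by (intro sum_pos) (auto simp: g_def dest!: f)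
  have y_mean: "1 - sum w A / card A / (sum g A / card A) = (\<Sum>i\<in>A. g i * y i) / sum g A"
    using S_pos n_pos by (simp add: gy_w sum_subtractf field_simps)
  have "0 < sum g A / card A" using S_pos n_pos by simp
  then have "sum f A / card A < 1" using mean_f by linarith
  from G_eq_G_yform[OF this, of \<xi> "sum w A / card A"]
  have "G \<xi> (sum w A / card A) (sum f A / card A)
      = G_yform c (sum g A / card A) ((\<Sum>i\<in>A. g i * y i) / sum g A)"
    unfolding mean_f y_mean c_def .
  moreover have "G \<xi> (w i) (f i) = G_yform c (g i) (y i)" if "i \<in> A" for i
    using G_eq_G_yform[of "f i"] f[OF that] by (simp add: c_def g_def y_def)
  moreover have "0 \<le> y i \<and> y i \<le> 1/2" if "i \<in> A" for i
    using f[OF that] w[OF that] by (auto simp: y_def field_simps)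
  ultimately show ?thesis
    using G_yform_mean_le[OF A _ _ c, of g y] f by (simp add: g_def)
qed

theorem lemma23:
  fixes w1 w2 w3 f1 f2 f3 \<xi> :: real
  assumes "w1 \<in> {0..1/2}" "w2 \<in> {0..1/2}" "w3 \<in> {0..1/2}"
    and "f1 \<in> {0..1/2}" "f2 \<in> {0..1/2}" "f3 \<in> {0..1/2}"
    and "(1 - f1) / 2 \<le> w1" "w1 \<le> 1 - f1"
    and "(1 - f2) / 2 \<le> w2" "w2 \<le> 1 - f2"
    and "(1 - f3) / 2 \<le> w3" "w3 \<le> 1 - f3"
    and "\<xi> \<in> {0..1/4}"
  shows "(G \<xi> w1 f1 + G \<xi> w2 f2) / 2 \<le> kappa * G \<xi> ((w1 + w2) / 2) ((f1 + f2) / 2)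
         \<and> (G \<xi> w1 f1 + G \<xi> w2 f2 + G \<xi> w3 f3) / 3
           \<le> kappa * G \<xi> ((w1 + w2 + w3) / 3) ((f1 + f2 + f3) / 3)"
proof -
  define w f where "w = (\<lambda>i::nat. if i = 0 then w1 else if i = 1 then w2 else w3)"
    and "f = (\<lambda>i::nat. if i = 0 then f1 else if i = 1 then f2 else f3)"
  have "(\<Sum>i\<in>A. G \<xi> (w i) (f i)) / card A \<le> kappa * G \<xi> (sum w A / card A) (sum f A / card A)"
    if "A \<subseteq> {0, 1, 2}" "A \<noteq> {}" for A
    using that assms
    by (intro G_mean_le) (auto simp: w_def f_def dest: finite_subset)
  from this[of "{0, 1}"] this[of "{0, 1, 2}"] show ?thesis
    by (simp add: w_def f_def add.assoc)
qed

end
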